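(* Let $Z_p\sim\rho_p$ and $\nu_p^2=\mathbb{E} Z_p^2$. Then for every real number $\ell \ge 2$, the function $p\mapsto\nu_p^{-\ell}\,\mathbb{E} |Z_p|^{\ell}$ is decreasing on $p>0$. In particular, for all $t\in\mathbb{R}$ and $p\ge 2$, \[ \mathbb{E} \exp(tZ_p) \le \exp(\nu_p^2t^2/2). \]
   Context: For $p>0$, $\rho_p$ is the probability density $\rho_p(x)=c_p e^{-|x|^p/p}$, $x\in\mathbb{R}$, with $c_p=\frac{p^{-1/p}}{2\Gamma(1+1/p)}$; one has $\nu_p^2=\frac{p^{2/p}\Gamma(1+3/p)}{3\Gamma(1+1/p)}$. *)

theory Defs
  imports "HOL-Analysis.Analysis"
begin

definition cp :: "real \<Rightarrow> real" where
  "cp p = p powr (-(1/p)) / (2 * Gamma (1 + 1/p))"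

definition rho :: "real \<Rightarrow> real \<Rightarrow> real" where
  "rho p x = cp p * exp (- (\<bar>x\<bar> powr p) / p)"

definition Erho :: "real \<Rightarrow> (real \<Rightarrow> real) \<Rightarrow> real" where
  "Erho p f = (\<integral>x. f x * rho p x \<partial>lborel)"

definition nu2 :: "real \<Rightarrow> real" where
  "nu2 p = Erho p (\<lambda>x. x\<^sup>2)"

definition nu :: "real \<Rightarrow> real" where
  "nu p = sqrt (nu2 p)"

end

theory Submission
  imports Defs
begin

text \<open>
  All absolute moments of \<open>\<rho>\<^sub>p\<close> are explicit:
  \<open>E|Z\<^sub>p|\<^sup>l = p\<^bsup>l/p\<^esup> \<Gamma>((l+1)/p) / \<Gamma>(1/p)\<close>, so \<open>\<nu>\<^sub>p\<^bsup>-l\<^esup> E|Z\<^sub>p|\<^sup>l = exp G(1/p)\<close> with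
  \<open>G(s) = ln \<Gamma>((l+1)s) + (l/2 - 1) ln \<Gamma>(s) - (l/2) ln \<Gamma>(3s)\<close>.
  Expanding \<open>G'\<close> with the series \<open>\<psi>(z) + \<gamma> = \<Sum>\<^sub>k 1/(k+1) - 1/(z+k)\<close>, its
  \<open>k\<close>-th term is \<open>l(l-2)sk / (((l+1)s+k)(3s+k)(s+k)) \<ge> 0\<close>; hence \<open>G\<close>
  increases and the normalised moment decreases in \<open>p\<close>.
  For \<open>p \<ge> 2\<close>, comparing with the Gaussian case \<open>p = 2\<close> gives
  \<open>E Z\<^sub>p\<^bsup>2k\<^esup> \<le> \<nu>\<^sub>p\<^bsup>2k\<^esup> (2k)!/(2\<^sup>k k!)\<close>; since \<open>\<rho>\<^sub>p\<close> is even, \<open>E exp(tZ\<^sub>p) = E cosh(tZ\<^sub>p)\<close>, and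
  summing the cosh series termwise yields \<open>exp(\<nu>\<^sub>p\<^sup>2 t\<^sup>2/2)\<close>.
\<close>

section \<open>Absolute moments of \<open>\<rho>\<^sub>p\<close>\<close>

lemma bij_betw_powr_divide:
  fixes p :: real
  assumes "p > 0"
  shows "bij_betw (\<lambda>x. x powr p / p) {0<..} {0<..}"
proof (rule bij_betwI')
  fix x y :: real assume "x \<in> {0<..}" "y \<in> {0<..}"
  moreover have "z = (z powr p / p * p) powr (1 / p)" if "z > 0" for z :: real
    using assms that by (simp add: powr_powr)
  ultimately show "(x powr p / p = y powr p / p) = (x = y)"
    by (metis greaterThan_iff)
next
  fix u :: real assume "u \<in> {0<..}"
  then show "\<exists>x\<in>{0<..}. u = x powr p / p"
    using assms by (intro bexI[of _ "(p * u) powr (1 / p)"]) (auto simp: powr_powr)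
qed (use assms in auto)

lemma has_integral_Gamma_real_open:
  fixes a :: real
  assumes "a > 0"
  shows "((\<lambda>t. t powr (a - 1) / exp t) has_integral Gamma a) {0<..}"
  using Gamma_integral_real[OF assms]
  by (subst (asm) has_integral_spike_set_eq[where T="{0<..}"])
     (auto intro!: negligible_subset[OF negligible_empty])

lemma has_integral_powr_exp_neg_powr:
  fixes p l :: real
  assumes p: "p > 0" and l: "l > -1"
  shows "((\<lambda>x. x powr l * exp (- (x powr p) / p)) has_integral
           p powr ((l + 1) / p - 1) * Gamma ((l + 1) / p)) {0<..}"
proof -
  define a where "a = (l + 1) / p"
  define g where "g x = x powr p / p" for x :: real
  define F where "F u = p powr (a - 1) * (u powr (a - 1) / exp u)" for u :: real
  have F: "(F has_integral p powr (a - 1) * Gamma a) {0<..}"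
    unfolding F_def using p l
    by (intro has_integral_mult_right has_integral_Gamma_real_open) (simp add: a_def)
  have "F absolutely_integrable_on {0<..}"
    using F by (intro nonnegative_absolutely_integrable_1) (auto simp: F_def)
  moreover have "(g has_field_derivative x powr (p - 1)) (at x within {0<..})" if "x \<in> {0<..}" for x
    using that p unfolding g_def by (auto intro!: derivative_eq_intros simp: field_simps)
  moreover have "inj_on g {0<..}" "g ` {0<..} = {0<..}"
    using bij_betw_powr_divide[OF p] unfolding g_def[abs_def] by (simp_all add: bij_betw_def)
  ultimately have "(\<lambda>x. \<bar>x powr (p - 1)\<bar> * F (g x)) absolutely_integrable_on {0<..} \<and>
      integral {0<..} (\<lambda>x. \<bar>x powr (p - 1)\<bar> * F (g x)) = p powr (a - 1) * Gamma a"
    using has_absolute_integral_change_of_variables_1'[of "{0<..}" g "\<lambda>x. x powr (p - 1)" F] F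
    by (auto simp: integral_unique)
  then have "((\<lambda>x. \<bar>x powr (p - 1)\<bar> * F (g x)) has_integral p powr (a - 1) * Gamma a) {0<..}"
    by (metis absolutely_integrable_on_def has_integral_integral set_lebesgue_integral_eq_integral(1))
  moreover have "\<bar>x powr (p - 1)\<bar> * F (g x) = x powr l * exp (- (x powr p) / p)" if "x > 0" for x
  proof -
    have "p * (a - 1) = l + 1 - p"
      using p by (simp add: a_def field_simps)
    then have "g x powr (a - 1) = x powr (l + 1 - p) / p powr (a - 1)"
      using that p by (simp add: g_def powr_divide powr_powr)
    moreover have "x powr (p - 1) * x powr (l + 1 - p) = x powr l"
      using that by (simp add: powr_add[symmetric])
    ultimately show ?thesis
      using that p by (simp add: F_def g_def exp_minus field_simps)
  qed
  ultimately show ?thesis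
    by (subst has_integral_cong[symmetric]) (auto simp: a_def)
qed

lemma has_integral_UNIV_if_even:
  fixes f :: "real \<Rightarrow> real"
  assumes pos: "(f has_integral I) {0<..}"
    and even: "\<And>x. f (- x) = f x" and nonneg: "\<And>x. x > 0 \<Longrightarrow> f x \<ge> 0"
  shows "(f has_integral 2 * I) UNIV"
proof -
  have "f absolutely_integrable_on {0<..}"
    using pos nonneg by (intro nonnegative_absolutely_integrable_1) auto
  moreover have "(uminus has_field_derivative -1) (at x within {..<0})" for x :: real
    by (auto intro!: derivative_eq_intros)
  moreover have "uminus ` {..<0::real} = {0<..}"
    by (auto simp: image_iff intro!: exI[of _ "- x" for x])
  ultimately have "(\<lambda>x. \<bar>-1\<bar> * f (- x)) absolutely_integrable_on {..<0} \<and>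
      integral {..<0} (\<lambda>x. \<bar>-1\<bar> * f (- x)) = I"
    using has_absolute_integral_change_of_variables_1'[of "{..<0::real}" uminus "\<lambda>x. -1" f I] pos
    by (auto simp: integral_unique)
  then have "f absolutely_integrable_on {..<0} \<and> integral {..<0} f = I"
    using even by simp
  then have neg: "(f has_integral I) {..<0}"
    by (metis absolutely_integrable_on_def has_integral_integral)
  have "(f has_integral I + I) ({..<0} \<union> {0<..})"
  proof (rule has_integral_Un[OF neg pos])
    have "{..<0::real} \<inter> {0<..} = {}" by auto
    then show "negligible ({..<0::real} \<inter> {0<..})" by simp
  qed
  then have "(f has_integral I + I) UNIV"
  proof (subst (asm) has_integral_spike_set_eq[where T=UNIV])
    show "negligible {x \<in> ({..<0} \<union> {0<..}) - UNIV. f x \<noteq> 0}" by simp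
    show "negligible {x \<in> UNIV - ({..<0} \<union> {0<..}). f x \<noteq> 0}"
      by (rule negligible_subset[of "{0}"]) auto
  qed
  then show ?thesis
    by (simp only: mult_2)
qed

definition abs_moment :: "real \<Rightarrow> real \<Rightarrow> real" where
  "abs_moment p l = p powr (l / p) * Gamma ((l + 1) / p) / Gamma (1 / p)"

lemma abs_moment_pos: "p > 0 \<Longrightarrow> l > -1 \<Longrightarrow> abs_moment p l > 0"
  unfolding abs_moment_def by (intro divide_pos_pos mult_pos_pos Gamma_real_pos) auto

lemma cp_pos: "p > 0 \<Longrightarrow> cp p > 0"
  unfolding cp_def by (intro divide_pos_pos mult_pos_pos Gamma_real_pos add_pos_pos) auto

lemma rho_nonneg: "p > 0 \<Longrightarrow> rho p x \<ge> 0"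
  using cp_pos[of p] by (simp add: rho_def)

lemma rho_minus: "rho p (- x) = rho p x"
  by (simp add: rho_def)

lemma abs_moment_eq_cp:
  fixes p l :: real
  assumes p: "p > 0"
  shows "abs_moment p l = 2 * (cp p * (p powr ((l + 1) / p - 1) * Gamma ((l + 1) / p)))"
proof -
  have "1 / p \<notin> \<int>\<^sub>\<le>\<^sub>0"
    using p by (auto dest: nonpos_Ints_nonpos)
  then have Gamma: "Gamma (1 + 1 / p) = 1 / p * Gamma (1 / p)"
    using Gamma_plus1[of "1 / p"] by (simp add: add.commute)
  have "- (1 / p) + ((l + 1) / p - 1) = l / p - 1"
    using p by (simp add: field_simps)
  then have powr: "p powr (- (1 / p)) * p powr ((l + 1) / p - 1) = p powr (l / p) / p"
    using p by (simp flip: powr_add add: powr_diff)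
  have "2 * (cp p * (p powr ((l + 1) / p - 1) * Gamma ((l + 1) / p)))
      = (p powr (- (1 / p)) * p powr ((l + 1) / p - 1)) * Gamma ((l + 1) / p) / Gamma (1 + 1 / p)"
    unfolding cp_def by simp
  also have "\<dots> = p powr (l / p) / p * Gamma ((l + 1) / p) / (1 / p * Gamma (1 / p))"
    unfolding Gamma powr ..
  also have "\<dots> = abs_moment p l"
    using p by (simp add: abs_moment_def)
  finally show ?thesis ..
qed

lemma has_integral_abs_powr_rho:
  fixes p l :: real
  assumes p: "p > 0" and l: "l > -1"
  shows "((\<lambda>x. \<bar>x\<bar> powr l * rho p x) has_integral abs_moment p l) UNIV"
proof -
  have "((\<lambda>x. cp p * (x powr l * exp (- (x powr p) / p))) has_integral
      cp p * (p powr ((l + 1) / p - 1) * Gamma ((l + 1) / p))) {0<..}"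
    by (intro has_integral_mult_right has_integral_powr_exp_neg_powr p l)
  then have "((\<lambda>x. \<bar>x\<bar> powr l * rho p x) has_integral
      cp p * (p powr ((l + 1) / p - 1) * Gamma ((l + 1) / p))) {0<..}"
    by (rule has_integral_eq[rotated]) (simp add: rho_def)
  then show ?thesis
    unfolding abs_moment_eq_cp[OF p]
    by (rule has_integral_UNIV_if_even) (auto simp: rho_minus rho_nonneg p)
qed

lemma integral_lborel_eq_if_has_integral:
  fixes h :: "real \<Rightarrow> real"
  assumes "h \<in> borel_measurable borel" and "\<And>x. h x \<ge> 0" and "(h has_integral I) UNIV"
  shows "integral\<^sup>L lborel h = I"
proof -
  have "I \<ge> 0"
    using has_integral_nonneg assms by blast
  moreover have "(\<integral>\<^sup>+ x. ennreal (h x) \<partial>lborel) = ennreal I"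
    using nn_integral_has_integral_lebesgue[of UNIV h I] assms by simp
  moreover have "integral\<^sup>L lborel h = enn2real (\<integral>\<^sup>+ x. ennreal (h x) \<partial>lborel)"
    using assms by (intro integral_eq_nn_integral) auto
  ultimately show ?thesis
    by simp
qed

lemma Erho_abs_powr:
  assumes "p > 0" and "l > -1"
  shows "Erho p (\<lambda>x. \<bar>x\<bar> powr l) = abs_moment p l"
  unfolding Erho_def
proof (rule integral_lborel_eq_if_has_integral)
  show "(\<lambda>x. \<bar>x\<bar> powr l * rho p x) \<in> borel_measurable borel"
    unfolding rho_def by measurable
qed (use assms in \<open>simp_all add: rho_nonneg has_integral_abs_powr_rho\<close>)

lemma nu2_eq_abs_moment: "p > 0 \<Longrightarrow> nu2 p = abs_moment p 2"
  using Erho_abs_powr[of p 2] by (simp add: nu2_def)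

section \<open>Monotonicity of the normalised moments\<close>

definition log_moment_ratio :: "real \<Rightarrow> real \<Rightarrow> real" where
  "log_moment_ratio l s = ln_Gamma ((l + 1) * s) + (l / 2 - 1) * ln_Gamma s - l / 2 * ln_Gamma (3 * s)"

lemma abs_moment_ratio_eq_exp:
  assumes p: "p > 0" and l: "l > -1"
  shows "abs_moment p 2 powr (- l / 2) * abs_moment p l = exp (log_moment_ratio l (1 / p))"
proof -
  have ln_abs_moment: "ln (abs_moment p m) = m / p * ln p + ln (Gamma ((m + 1) / p)) - ln (Gamma (1 / p))"
    if "m > -1" for m
  proof -
    have "ln (a * b / c) = ln a + ln b - ln c" if "a > 0" "b > 0" "c > 0" for a b c :: real
      using that by (simp add: ln_div ln_mult)
    then have "ln (abs_moment p m) = ln (p powr (m / p)) + ln (Gamma ((m + 1) / p)) - ln (Gamma (1 / p))"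
      unfolding abs_moment_def using p that by simp
    moreover have "ln (p powr (m / p)) = m / p * ln p"
      using p by (simp add: ln_powr)
    ultimately show ?thesis
      by linarith
  qed
  have pos: "abs_moment p 2 > 0" "abs_moment p l > 0"
    using p l by (simp_all add: abs_moment_pos)
  then have "ln (abs_moment p 2 powr (- l / 2) * abs_moment p l)
      = - l / 2 * ln (abs_moment p 2) + ln (abs_moment p l)"
    by (simp add: ln_mult ln_powr)
  also have "\<dots> = ln (Gamma ((l + 1) / p)) + (l / 2 - 1) * ln (Gamma (1 / p)) - l / 2 * ln (Gamma (3 / p))"
    using l by (simp add: ln_abs_moment algebra_simps)
  also have "\<dots> = log_moment_ratio l (1 / p)"
    using p l by (simp add: log_moment_ratio_def ln_Gamma_real_pos)
  finally have "ln (abs_moment p 2 powr (- l / 2) * abs_moment p l) = log_moment_ratio l (1 / p)" .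
  moreover have "abs_moment p 2 powr (- l / 2) * abs_moment p l > 0"
    using pos by simp
  ultimately show ?thesis
    by (metis exp_ln)
qed

lemma Digamma_plus_euler_mascheroni_sums:
  fixes z :: real
  assumes "z \<noteq> 0"
  shows "(\<lambda>k. inverse (real (Suc k)) - inverse (z + real k)) sums (Digamma z + euler_mascheroni)"
  using summable_Digamma[OF assms] by (simp add: Digamma_def summable_sums)

lemma moment_ratio_series_term_nonneg:
  fixes l s k :: real
  assumes l: "l \<ge> 2" and s: "s > 0" and k: "k \<ge> 0"
  shows "3 * l / 2 / (3 * s + k) - (l + 1) / ((l + 1) * s + k) - (l / 2 - 1) / (s + k) \<ge> 0"
proof -
  have A: "(l + 1) * s + k > 0" and B: "3 * s + k > 0" and C: "s + k > 0"
    using l s k by (auto intro: add_pos_nonneg)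
  have common_denominator: "a / y - b / x - c / z = (a * x * z - b * y * z - c * x * y) / (x * y * z)"
    if "x > 0" "y > 0" "z > 0" for a b c x y z :: real
    using that by (simp add: field_simps)
  have numerator: "3 * l / 2 * ((l + 1) * s + k) * (s + k) - (l + 1) * (3 * s + k) * (s + k)
      - (l / 2 - 1) * ((l + 1) * s + k) * (3 * s + k) = l * (l - 2) * s * k"
    by (simp add: field_simps)
  have "3 * l / 2 / (3 * s + k) - (l + 1) / ((l + 1) * s + k) - (l / 2 - 1) / (s + k)
      = l * (l - 2) * s * k / (((l + 1) * s + k) * (3 * s + k) * (s + k))"
    unfolding common_denominator[OF A B C] numerator ..
  also have "\<dots> \<ge> 0"
    using A B C l s k by (intro divide_nonneg_pos mult_nonneg_nonneg mult_pos_pos) auto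
  finally show ?thesis .
qed

lemma log_moment_ratio_has_real_derivative:
  assumes l: "l > -1" and s: "s > 0"
  shows "(log_moment_ratio l has_real_derivative
           (l + 1) * Digamma ((l + 1) * s) + (l / 2 - 1) * Digamma s - 3 * (l / 2) * Digamma (3 * s)) (at s)"
proof -
  have "((\<lambda>s. ln_Gamma ((l + 1) * s)) has_real_derivative Digamma ((l + 1) * s) * (l + 1)) (at s)"
    using l s by (intro DERIV_chain2[OF has_field_derivative_ln_Gamma_real])
       (auto intro!: derivative_eq_intros)
  moreover have "(ln_Gamma has_real_derivative Digamma s) (at s)"
    using s by (rule has_field_derivative_ln_Gamma_real)
  moreover have "((\<lambda>s. ln_Gamma (3 * s)) has_real_derivative Digamma (3 * s) * 3) (at s)"
    using s by (intro DERIV_chain2[OF has_field_derivative_ln_Gamma_real])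
       (auto intro!: derivative_eq_intros)
  ultimately have "((\<lambda>s. ln_Gamma ((l + 1) * s) + (l / 2 - 1) * ln_Gamma s - l / 2 * ln_Gamma (3 * s))
      has_real_derivative Digamma ((l + 1) * s) * (l + 1) + (l / 2 - 1) * Digamma s
        - l / 2 * (Digamma (3 * s) * 3)) (at s)"
    by (intro DERIV_diff DERIV_add DERIV_cmult)
  then show ?thesis
    unfolding log_moment_ratio_def[abs_def] by (simp add: algebra_simps)
qed

lemma log_moment_ratio_deriv_nonneg:
  fixes l s :: real
  assumes l: "l \<ge> 2" and s: "s > 0"
  shows "(l + 1) * Digamma ((l + 1) * s) + (l / 2 - 1) * Digamma s - 3 * (l / 2) * Digamma (3 * s) \<ge> 0"
proof -
  define T where "T z k = inverse (real (Suc k)) - inverse (z + real k)" for z :: real and k :: nat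
  define D where "D k = (l + 1) * T ((l + 1) * s) k + (l / 2 - 1) * T s k - 3 * (l / 2) * T (3 * s) k"
    for k
  have "D sums ((l + 1) * (Digamma ((l + 1) * s) + euler_mascheroni)
      + (l / 2 - 1) * (Digamma s + euler_mascheroni) - 3 * (l / 2) * (Digamma (3 * s) + euler_mascheroni))"
    unfolding D_def T_def using l s
    by (intro sums_add sums_diff sums_mult Digamma_plus_euler_mascheroni_sums) auto
  also have "\<dots> = (l + 1) * Digamma ((l + 1) * s) + (l / 2 - 1) * Digamma s - 3 * (l / 2) * Digamma (3 * s)"
    by (simp add: ring_distribs)
  finally have sums: "D sums \<dots>" .
  \<comment> \<open>the weights sum to zero, so the \<open>1/(k+1)\<close> parts of the Digamma series cancel\<close>
  have "(l + 1) * (i - a) + (l / 2 - 1) * (i - c) - 3 * (l / 2) * (i - b)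
      = 3 * l / 2 * b - (l + 1) * a - (l / 2 - 1) * c" for i a b c :: real
    by (simp add: field_simps)
  then have "D k = 3 * l / 2 / (3 * s + k) - (l + 1) / ((l + 1) * s + k) - (l / 2 - 1) / (s + k)" for k
    unfolding D_def T_def by (simp only: divide_inverse)
  then have "D k \<ge> 0" for k
    using moment_ratio_series_term_nonneg[OF l s] by simp
  then show ?thesis
    using sums by (metis sums_unique suminf_nonneg sums_summable)
qed

lemma log_moment_ratio_mono:
  assumes l: "l \<ge> 2" and a: "a > 0" and ab: "a \<le> b"
  shows "log_moment_ratio l a \<le> log_moment_ratio l b"
proof (rule DERIV_nonneg_imp_increasing_open[OF ab])
  fix x assume "a < x" "x < b"
  then have x: "x > 0"
    using a by simp
  then show "\<exists>y. (log_moment_ratio l has_real_derivative y) (at x) \<and> 0 \<le> y"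
    using log_moment_ratio_has_real_derivative[of l x] log_moment_ratio_deriv_nonneg[OF l x] l by auto
next
  have "isCont (log_moment_ratio l) x" if "x \<in> {a..b}" for x
    using that a l log_moment_ratio_has_real_derivative[of l x] by (auto intro: DERIV_isCont)
  then show "continuous_on {a..b} (log_moment_ratio l)"
    by (rule continuous_at_imp_continuous_on[OF ballI])
qed

lemma nu_powr_Erho_abs_powr:
  assumes p: "p > 0" and l: "l > -1"
  shows "nu p powr (- l) * Erho p (\<lambda>x. \<bar>x\<bar> powr l) = exp (log_moment_ratio l (1 / p))"
proof -
  have "nu p powr (- l) = abs_moment p 2 powr (- l / 2)"
    using abs_moment_pos[OF p, of 2]
    by (simp add: nu_def nu2_eq_abs_moment[OF p] powr_half_sqrt[symmetric] powr_powr)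
  then show ?thesis
    using abs_moment_ratio_eq_exp[OF p l] Erho_abs_powr[OF p l] by simp
qed

lemma normalized_abs_moment_antimono:
  assumes l: "l \<ge> 2" and p: "0 < p" and pq: "p \<le> q"
  shows "nu q powr (- l) * Erho q (\<lambda>x. \<bar>x\<bar> powr l) \<le> nu p powr (- l) * Erho p (\<lambda>x. \<bar>x\<bar> powr l)"
proof -
  have "log_moment_ratio l (1 / q) \<le> log_moment_ratio l (1 / p)"
    using p pq by (intro log_moment_ratio_mono l) (simp_all add: frac_le)
  then show ?thesis
    using p pq l by (simp add: nu_powr_Erho_abs_powr)
qed

section \<open>The sub-Gaussian bound\<close>

lemma Gamma_nat_plus_half:
  "Gamma (real k + 1 / 2) * 4 ^ k * fact k = Gamma (1 / 2) * fact (2 * k)"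
proof (induction k)
  case 0
  then show ?case by simp
next
  case (Suc k)
  have "real k + 1 / 2 \<notin> \<int>\<^sub>\<le>\<^sub>0"
    by (auto dest: nonpos_Ints_nonpos)
  then have Gamma: "Gamma (real (Suc k) + 1 / 2) = (real k + 1 / 2) * Gamma (real k + 1 / 2)"
    using Gamma_plus1[of "real k + 1 / 2"] by (simp add: add_ac)
  have fact: "fact (2 * Suc k) = (2 * real k + 2) * (2 * real k + 1) * (fact (2 * k) :: real)"
    by (simp add: algebra_simps)
  have "Gamma (real (Suc k) + 1 / 2) * 4 ^ Suc k * fact (Suc k)
      = (2 * real k + 2) * (2 * real k + 1) * (Gamma (real k + 1 / 2) * 4 ^ k * fact k)"
    unfolding Gamma by (simp add: algebra_simps)
  also have "\<dots> = Gamma (1 / 2) * fact (2 * Suc k)"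
    unfolding Suc.IH fact by (simp add: algebra_simps)
  finally show ?case .
qed

lemma abs_moment_gaussian_even:
  "abs_moment 2 (2 * real k) = fact (2 * k) / (2 ^ k * fact k)"
proof -
  have "abs_moment 2 (2 * real k) = 2 ^ k * Gamma (real k + 1 / 2) / Gamma (1 / 2)"
    by (simp add: abs_moment_def powr_realpow add_divide_distrib)
  also have "Gamma (real k + 1 / 2) = Gamma (1 / 2) * fact (2 * k) / (4 ^ k * fact k)"
    using Gamma_nat_plus_half[of k] by (simp add: field_simps)
  also have "2 ^ k * (Gamma (1 / 2) * fact (2 * k) / (4 ^ k * fact k)) / Gamma (1 / 2)
      = 2 ^ k * fact (2 * k) / (4 ^ k * fact k :: real)"
    by (simp add: Gamma_one_half_real)
  also have "(4::real) ^ k = 2 ^ k * 2 ^ k"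
    by (simp flip: power_mult_distrib)
  finally show ?thesis
    by simp
qed

lemma abs_moment_even_le_gaussian:
  assumes p: "p \<ge> 2"
  shows "abs_moment p (2 * real k) \<le> abs_moment p 2 ^ k * (fact (2 * k) / (2 ^ k * fact k))"
proof (cases "k = 0")
  case True
  then show ?thesis
    using p by (simp add: abs_moment_def)
next
  case False
  define l where "l = 2 * real k"
  have l: "l \<ge> 2"
    using False by (simp add: l_def)
  have M2: "abs_moment p 2 > 0"
    using p by (simp add: abs_moment_pos)
  have "abs_moment 2 2 = 1"
    using abs_moment_gaussian_even[of 1] by simp
  then have ratio_le: "abs_moment p 2 powr (- l / 2) * abs_moment p l \<le> abs_moment 2 l"
    using p l log_moment_ratio_mono[OF l, of "1 / p" "1 / 2"]
      abs_moment_ratio_eq_exp[of p l] abs_moment_ratio_eq_exp[of 2 l]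
    by (simp add: frac_le)
  have "abs_moment p l = abs_moment p 2 powr (- l / 2) * abs_moment p l * abs_moment p 2 ^ k"
    using M2 by (simp add: l_def powr_minus powr_realpow)
  also have "\<dots> \<le> abs_moment 2 l * abs_moment p 2 ^ k"
    using M2 ratio_le by (intro mult_right_mono) simp_all
  finally show ?thesis
    unfolding l_def abs_moment_gaussian_even by (simp add: mult.commute)
qed

lemma cosh_even_power_sums: "(\<lambda>k. x ^ (2 * k) / fact (2 * k)) sums cosh (x::real)"
proof -
  let ?f = "\<lambda>n. if even n then x ^ n /\<^sub>R fact n else 0"
  have "strict_mono (\<lambda>k::nat. 2 * k)"
    by (rule strict_monoI) simp
  moreover have "?f n = 0" if "n \<notin> range (\<lambda>k::nat. 2 * k)" for n
    using that by (auto elim!: evenE)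
  ultimately have "(\<lambda>k. ?f (2 * k)) sums cosh x \<longleftrightarrow> ?f sums cosh x"
    by (rule sums_mono_reindex)
  then show ?thesis
    using cosh_converges[of x] by (simp add: divide_inverse mult.commute)
qed

lemma nn_integral_even_power_rho:
  assumes p: "p > 0" and c: "c \<ge> 0"
  shows "(\<integral>\<^sup>+x. ennreal (c * x ^ (2 * k) * rho p x) \<partial>lborel) = ennreal (c * abs_moment p (2 * real k))"
proof -
  have "((\<lambda>x. x ^ (2 * k) * rho p x) has_integral abs_moment p (2 * real k)) UNIV"
  proof (rule has_integral_spike[OF negligible_sing[of 0] _ has_integral_abs_powr_rho[OF p]])
    fix x :: real assume "x \<in> UNIV - {0}"
    then have "\<bar>x\<bar> powr real (2 * k) = \<bar>x\<bar> ^ (2 * k)"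
      by (intro powr_realpow) simp
    then show "x ^ (2 * k) * rho p x = \<bar>x\<bar> powr (2 * real k) * rho p x"
      by (simp add: power_even_abs)
  qed simp
  then have "((\<lambda>x. c * (x ^ (2 * k) * rho p x)) has_integral c * abs_moment p (2 * real k)) UNIV"
    by (rule has_integral_mult_right)
  moreover have "0 \<le> c * (x ^ (2 * k) * rho p x)" for x :: real
    using c rho_nonneg[OF p] by (simp add: power_mult)
  ultimately have "integral\<^sup>N lborel (\<lambda>x. indicator UNIV x * (c * (x ^ (2 * k) * rho p x)))
      = c * abs_moment p (2 * real k)"
    by (intro nn_integral_has_integral_lebesgue)
  then show ?thesis
    by (simp add: mult.assoc)
qed

lemma nn_integral_cosh_rho:
  assumes p: "p > 0"
  shows "(\<integral>\<^sup>+x. ennreal (cosh (t * x) * rho p x) \<partial>lborel)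
    = (\<Sum>k. ennreal (t ^ (2 * k) / fact (2 * k) * abs_moment p (2 * real k)))"
proof -
  define a where "a k x = t ^ (2 * k) / fact (2 * k) * x ^ (2 * k) * rho p x" for k x
  have a_nonneg: "a k x \<ge> 0" for k x
    using rho_nonneg[OF p] by (simp add: a_def power_mult)
  have "(\<lambda>k. a k x) sums (cosh (t * x) * rho p x)" for x
    using sums_mult2[OF cosh_even_power_sums[of "t * x"], of "rho p x"]
    by (simp add: a_def power_mult_distrib)
  then have "ennreal (cosh (t * x) * rho p x) = (\<Sum>k. ennreal (a k x))" for x
    using a_nonneg by (simp add: suminf_ennreal2 sums_iff)
  then have "(\<integral>\<^sup>+x. ennreal (cosh (t * x) * rho p x) \<partial>lborel) = (\<Sum>k. \<integral>\<^sup>+x. ennreal (a k x) \<partial>lborel)"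
    by (simp add: a_def rho_def nn_integral_suminf)
  also have "\<dots> = (\<Sum>k. ennreal (t ^ (2 * k) / fact (2 * k) * abs_moment p (2 * real k)))"
    unfolding a_def by (subst nn_integral_even_power_rho[OF p]) (simp_all add: power_mult)
  finally show ?thesis .
qed

lemma nn_integral_exp_rho_eq_cosh:
  assumes p: "p > 0"
  shows "(\<integral>\<^sup>+x. ennreal (exp (t * x) * rho p x) \<partial>lborel)
    = (\<integral>\<^sup>+x. ennreal (cosh (t * x) * rho p x) \<partial>lborel)"
proof -
  let ?E = "\<lambda>t. \<integral>\<^sup>+x. ennreal (exp (t * x) * rho p x) \<partial>lborel"
  have meas: "(\<lambda>x. ennreal (exp (t * x) * rho p x)) \<in> borel_measurable borel" for t
    unfolding rho_def by measurable
  have "?E t = ennreal \<bar>-1\<bar> *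
      (\<integral>\<^sup>+x. ennreal (exp (t * (0 + (-1) * x)) * rho p (0 + (-1) * x)) \<partial>lborel)"
    by (rule nn_integral_real_affine[OF meas]) simp
  then have "?E (- t) = ?E t"
    by (simp add: rho_minus)
  have "2 * ennreal (cosh (t * x) * rho p x)
      = ennreal (exp (t * x) * rho p x) + ennreal (exp (- t * x) * rho p x)" for x
  proof -
    have "2 * ennreal (cosh (t * x) * rho p x) = ennreal (2 * (cosh (t * x) * rho p x))"
      by (simp add: ennreal_mult')
    also have "2 * (cosh (t * x) * rho p x) = exp (t * x) * rho p x + exp (- t * x) * rho p x"
      by (simp add: cosh_def field_simps)
    finally show ?thesis
      using rho_nonneg[OF p, of x] by (simp add: ennreal_plus)
  qed
  moreover have "(\<lambda>x. ennreal (cosh (t * x) * rho p x)) \<in> borel_measurable borel"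
    unfolding rho_def cosh_def by measurable
  ultimately have "2 * (\<integral>\<^sup>+x. ennreal (cosh (t * x) * rho p x) \<partial>lborel)
      = (\<integral>\<^sup>+x. ennreal (exp (t * x) * rho p x) + ennreal (exp (- t * x) * rho p x) \<partial>lborel)"
    by (simp flip: nn_integral_cmult)
  also have "\<dots> = ?E t + ?E (- t)"
    using meas[of t] meas[of "- t"] by (intro nn_integral_add) simp_all
  also have "\<dots> = 2 * ?E t"
    using \<open>?E (- t) = ?E t\<close> by (simp add: mult_2)
  finally show ?thesis
    by (simp add: ennreal_mult_cancel_left)
qed

lemma Erho_exp_le_subgaussian:
  assumes p: "p \<ge> 2"
  shows "Erho p (\<lambda>x. exp (t * x)) \<le> exp (nu2 p * t\<^sup>2 / 2)"
proof -
  have p0: "p > 0"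
    using p by simp
  define B where "B = nu2 p * t\<^sup>2 / 2"
  have B: "B \<ge> 0"
    using abs_moment_pos[OF p0, of 2] by (simp add: B_def nu2_eq_abs_moment[OF p0])
  have exp_B: "(\<Sum>k. ennreal (B ^ k / fact k)) = ennreal (exp B)"
    using exp_converges[of B] B by (simp add: suminf_ennreal2 sums_iff divide_inverse mult.commute)
  have term_le: "t ^ (2 * k) / fact (2 * k) * abs_moment p (2 * real k) \<le> B ^ k / fact k" for k
  proof -
    have "t ^ (2 * k) / fact (2 * k) * abs_moment p (2 * real k)
        \<le> t ^ (2 * k) / fact (2 * k) * (abs_moment p 2 ^ k * (fact (2 * k) / (2 ^ k * fact k)))"
      by (intro mult_left_mono abs_moment_even_le_gaussian p) (simp add: power_mult)
    also have "\<dots> = B ^ k / fact k"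
      by (simp add: B_def nu2_eq_abs_moment[OF p0] power_mult_distrib power_divide power_mult)
    finally show ?thesis .
  qed
  have "Erho p (\<lambda>x. exp (t * x)) = enn2real (\<integral>\<^sup>+x. ennreal (exp (t * x) * rho p x) \<partial>lborel)"
    unfolding Erho_def using rho_nonneg[OF p0]
    by (intro integral_eq_nn_integral) (auto simp: rho_def)
  also have "\<dots> = enn2real (\<Sum>k. ennreal (t ^ (2 * k) / fact (2 * k) * abs_moment p (2 * real k)))"
    by (simp add: nn_integral_exp_rho_eq_cosh[OF p0] nn_integral_cosh_rho[OF p0])
  also have "\<dots> \<le> enn2real (\<Sum>k. ennreal (B ^ k / fact k))"
    using exp_B by (intro enn2real_mono suminf_le ennreal_leI term_le) simp_all
  also have "\<dots> = exp B"
    using exp_B by simp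
  finally show ?thesis
    unfolding B_def .
qed

theorem lemma2p1:
  shows "(\<forall>l::real. l \<ge> 2 \<longrightarrow>
            (\<forall>p q::real. 0 < p \<and> p \<le> q \<longrightarrow>
               nu q powr (-l) * Erho q (\<lambda>x. \<bar>x\<bar> powr l)
                 \<le> nu p powr (-l) * Erho p (\<lambda>x. \<bar>x\<bar> powr l)))
       \<and> (\<forall>t p::real. p \<ge> 2 \<longrightarrow>
            Erho p (\<lambda>x. exp (t * x)) \<le> exp (nu2 p * t\<^sup>2 / 2))"
  using normalized_abs_moment_antimono Erho_exp_le_subgaussian by blast

end
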